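(* If $f_N\in H_N^{\mathrm{sip}}$ converges weakly to $f\in H^{\mathrm{sbm}}$ with respect to the Hilbert space convergence $H_N^{\mathrm{sip}}\to H^{\mathrm{sbm}}$, then $\lim_{N\to\infty}f_N(0)=f(0)$.
   Context: $\gamma>0$; $\mu_N$ gives mass $\frac1N$ to each point of $\frac1N\mathbb Z$; $\nu_{\gamma,N}=\mu_N+\sqrt2\gamma\delta_0$; $H_N^{\mathrm{sip}}=L^2(\frac1N\mathbb Z,\nu_{\gamma,N})$; $H^{\mathrm{sbm}}=L^2(\mathbb R,dx+\sqrt2\gamma\delta_0)$ (so $f(0)$ is well defined for $f\in H^{\mathrm{sbm}}$). Hilbert convergence is witnessed by $C=\{f+\lambda\mathbf 1_{\{0\}}:f\in C_c^\infty(\mathbb R),\lambda\in\mathbb R\}$ and $\Phi_Nf=f|_{\frac1N\mathbb Z}$. Strong convergence $g_N\to g$: there exist $\tilde g_M\in C$ with $\|\tilde g_M-g\|_{H^{\mathrm{sbm}}}\to0$ and $\lim_M\limsup_N\|\Phi_N\tilde g_M-g_N\|_{H_N^{\mathrm{sip}}}=0$. Weak convergence $f_N\to f$: $\langle f_N,g_N\rangle_{H_N^{\mathrm{sip}}}\to\langle f,g\rangle_{H^{\mathrm{sbm}}}$ for every strongly convergent $g_N\to g$. *)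

theory Defs
  imports "HOL-Analysis.Analysis"
begin

definition smooth_real :: "(real \<Rightarrow> real) \<Rightarrow> bool" where
  "smooth_real f \<longleftrightarrow> (\<forall>n x. ((deriv ^^ n) f) differentiable (at x))"

definition Cc_infty :: "(real \<Rightarrow> real) set" where
  "Cc_infty = {f. smooth_real f \<and> compact (closure {x. f x \<noteq> 0})}"

definition core_C :: "(real \<Rightarrow> real) set" where
  "core_C = {(\<lambda>x. f x + c * indicator {0} x) | f c. f \<in> Cc_infty}"

(* H^sbm = L^2(R, dx + sqrt 2 \<gamma> \<delta>_0), elements represented by functions real \<Rightarrow> real *)
definition in_Hsbm :: "(real \<Rightarrow> real) \<Rightarrow> bool" where
  "in_Hsbm f \<longleftrightarrow> f \<in> borel_measurable lborel \<and> integrable lborel (\<lambda>x. (f x)\<^sup>2)"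

definition sbm_inner :: "real \<Rightarrow> (real \<Rightarrow> real) \<Rightarrow> (real \<Rightarrow> real) \<Rightarrow> real" where
  "sbm_inner \<gamma> f g = (\<integral>x. f x * g x \<partial>lborel) + sqrt 2 * \<gamma> * f 0 * g 0"

definition sbm_norm :: "real \<Rightarrow> (real \<Rightarrow> real) \<Rightarrow> real" where
  "sbm_norm \<gamma> f = sqrt (sbm_inner \<gamma> f f)"

(* H_N^sip = L^2((1/N)Z, \<mu>_N + sqrt 2 \<gamma> \<delta>_0); a function g on (1/N)Z is represented
   by k \<mapsto> g(k/N), so the value at the point 0 is g 0 *)
definition in_Hsip :: "(int \<Rightarrow> real) \<Rightarrow> bool" where
  "in_Hsip g \<longleftrightarrow> (\<lambda>k. (g k)\<^sup>2) summable_on UNIV"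

definition sip_inner :: "real \<Rightarrow> nat \<Rightarrow> (int \<Rightarrow> real) \<Rightarrow> (int \<Rightarrow> real) \<Rightarrow> real" where
  "sip_inner \<gamma> N f g = (1 / real N) * (\<Sum>\<^sub>\<infinity>k\<in>UNIV. f k * g k) + sqrt 2 * \<gamma> * f 0 * g 0"

definition sip_norm :: "real \<Rightarrow> nat \<Rightarrow> (int \<Rightarrow> real) \<Rightarrow> real" where
  "sip_norm \<gamma> N g = sqrt (sip_inner \<gamma> N g g)"

definition Phi :: "nat \<Rightarrow> (real \<Rightarrow> real) \<Rightarrow> (int \<Rightarrow> real)" where
  "Phi N f = (\<lambda>k. f (real_of_int k / real N))"

definition strong_conv :: "real \<Rightarrow> (nat \<Rightarrow> int \<Rightarrow> real) \<Rightarrow> (real \<Rightarrow> real) \<Rightarrow> bool" where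
  "strong_conv \<gamma> gs g \<longleftrightarrow> (\<forall>N. in_Hsip (gs N)) \<and> in_Hsbm g \<and>
     (\<exists>gt :: nat \<Rightarrow> real \<Rightarrow> real. (\<forall>M. gt M \<in> core_C) \<and>
        (\<lambda>M. sbm_norm \<gamma> (\<lambda>x. gt M x - g x)) \<longlonglongrightarrow> 0 \<and>
        (\<lambda>M. limsup (\<lambda>N. ereal (sip_norm \<gamma> N (\<lambda>k. Phi N (gt M) k - gs N k)))) \<longlonglongrightarrow> 0)"

definition weak_conv :: "real \<Rightarrow> (nat \<Rightarrow> int \<Rightarrow> real) \<Rightarrow> (real \<Rightarrow> real) \<Rightarrow> bool" where
  "weak_conv \<gamma> fs f \<longleftrightarrow> (\<forall>gs g. strong_conv \<gamma> gs g \<longrightarrow>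
     (\<lambda>N. sip_inner \<gamma> N (fs N) (gs N)) \<longlonglongrightarrow> sbm_inner \<gamma> f g)"

end

theory Submission
  imports Defs
begin

text \<open>Test the weak convergence against the constant lattice sequence \<open>\<delta>\<^sub>0\<close>, which converges
  strongly to the core element \<open>\<one>\<^sub>{\<^sub>0\<^sub>}\<close>. Since \<open>{0}\<close> is Lebesgue-null, the pairings are
  \<open>(1/N + \<surd>2\<gamma>) f\<^sub>N(0)\<close> and \<open>\<surd>2\<gamma> f(0)\<close>, and the factor \<open>1/N + \<surd>2\<gamma>\<close> tends to \<open>\<surd>2\<gamma> > 0\<close>.\<close>

lemma deriv_funpow_zero: "(deriv ^^ n) (\<lambda>x::real. 0::real) = (\<lambda>x. 0)"
proof (induction n)
  case 0
  then show ?case by simp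
next
  case (Suc n)
  have "deriv (\<lambda>x::real. 0::real) = (\<lambda>x. 0)"
    by (rule ext, rule DERIV_imp_deriv) simp
  with Suc show ?case by simp
qed

lemma zero_in_Cc_infty: "(\<lambda>x. 0) \<in> Cc_infty"
  unfolding Cc_infty_def smooth_real_def by (simp add: deriv_funpow_zero)

lemma indicator_zero_in_core_C: "indicator {0} \<in> core_C"
  unfolding core_C_def using zero_in_Cc_infty
  by (intro CollectI exI[of _ "\<lambda>x. 0"] exI[of _ 1]) auto

lemma in_Hsbm_indicator_zero: "in_Hsbm (indicator {0})"
proof -
  have "(\<lambda>x. (indicator {0::real} x :: real)\<^sup>2) = indicator {0}"
    by (auto simp: indicator_def)
  then show ?thesis
    unfolding in_Hsbm_def by simp
qed

lemma in_Hsip_indicator_zero: "in_Hsip (indicator {0})"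
proof -
  have "(\<lambda>k. (indicator {0::int} k :: real)\<^sup>2) summable_on {0}"
    by simp
  then show ?thesis
    unfolding in_Hsip_def
    using summable_on_cong_neutral[of "{0}" UNIV "\<lambda>k. (indicator {0::int} k :: real)\<^sup>2"]
    by auto
qed

lemma Phi_indicator_zero:
  assumes "N > 0"
  shows "Phi N (indicator {0}) = indicator {0}"
  using assms by (auto simp: Phi_def indicator_def)

lemma strong_conv_eventually_Phi:
  assumes "g \<in> core_C" "in_Hsbm g" "\<And>N. in_Hsip (gs N)"
    and "eventually (\<lambda>N. gs N = Phi N g) sequentially"
  shows "strong_conv \<gamma> gs g"
  unfolding strong_conv_def
proof (intro conjI allI exI[of _ "\<lambda>M. g"])
  show "(\<lambda>M. sbm_norm \<gamma> (\<lambda>x. g x - g x)) \<longlonglongrightarrow> 0"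
    by (simp add: sbm_norm_def sbm_inner_def)
  have "eventually (\<lambda>N. ereal (sip_norm \<gamma> N (\<lambda>k. Phi N g k - gs N k)) = 0) sequentially"
    using assms(4) by eventually_elim (simp add: sip_norm_def sip_inner_def)
  then have "(\<lambda>N. ereal (sip_norm \<gamma> N (\<lambda>k. Phi N g k - gs N k))) \<longlonglongrightarrow> 0"
    by (rule tendsto_eventually)
  then show "(\<lambda>M. limsup (\<lambda>N. ereal (sip_norm \<gamma> N (\<lambda>k. Phi N g k - gs N k)))) \<longlonglongrightarrow> 0"
    by (simp add: lim_imp_Limsup)
qed (use assms in auto)

lemma strong_conv_indicator_zero: "strong_conv \<gamma> (\<lambda>N. indicator {0}) (indicator {0})"
proof (rule strong_conv_eventually_Phi)
  show "eventually (\<lambda>N. indicator {0} = Phi N (indicator {0})) sequentially"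
    using eventually_gt_at_top[of 0] by eventually_elim (simp add: Phi_indicator_zero)
qed (simp_all add: indicator_zero_in_core_C in_Hsbm_indicator_zero in_Hsip_indicator_zero)

lemma sbm_inner_indicator_zero: "sbm_inner \<gamma> f (indicator {0}) = sqrt 2 * \<gamma> * f 0"
proof -
  have "AE x in lborel. f x * indicator {0} x = (0::real)"
    using AE_lborel_singleton[of 0] by eventually_elim simp
  then have "(\<integral>x. f x * indicator {0} x \<partial>lborel) = 0"
    by (rule integral_eq_zero_AE)
  then show ?thesis
    by (simp add: sbm_inner_def)
qed

lemma sip_inner_indicator_zero: "sip_inner \<gamma> N g (indicator {0}) = (1 / real N + sqrt 2 * \<gamma>) * g 0"
proof -
  have "(\<Sum>\<^sub>\<infinity>k\<in>UNIV. g k * indicator {0} k) = (\<Sum>\<^sub>\<infinity>k\<in>{0}. g k * indicator {0} k)"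
    by (rule infsum_cong_neutral) auto
  then show ?thesis
    by (simp add: sip_inner_def algebra_simps)
qed

lemma tendsto_cancel_factor:
  fixes a b :: "nat \<Rightarrow> 'a::real_normed_field"
  assumes "(\<lambda>n. b n * a n) \<longlonglongrightarrow> b0 * L" "b \<longlonglongrightarrow> b0" "b0 \<noteq> 0"
  shows "a \<longlonglongrightarrow> L"
proof -
  have "(\<lambda>n. b n * a n / b n) \<longlonglongrightarrow> b0 * L / b0"
    using assms by (intro tendsto_divide)
  moreover have "eventually (\<lambda>n. b n * a n / b n = a n) sequentially"
    using tendsto_imp_eventually_ne[OF assms(2,3)] by eventually_elim simp
  ultimately show ?thesis
    using assms(3) by (simp add: tendsto_cong)
qed

theorem proposition5p9:
  fixes \<gamma> :: real and fs :: "nat \<Rightarrow> int \<Rightarrow> real" and f :: "real \<Rightarrow> real"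
  assumes "\<gamma> > 0"
    and "\<And>N. in_Hsip (fs N)"
    and "in_Hsbm f"
    and "weak_conv \<gamma> fs f"
  shows "(\<lambda>N. fs N 0) \<longlonglongrightarrow> f 0"
proof (rule tendsto_cancel_factor)
  have "(\<lambda>N. sip_inner \<gamma> N (fs N) (indicator {0})) \<longlonglongrightarrow> sbm_inner \<gamma> f (indicator {0})"
    using assms(4) strong_conv_indicator_zero unfolding weak_conv_def by blast
  then show "(\<lambda>N. (1 / real N + sqrt 2 * \<gamma>) * fs N 0) \<longlonglongrightarrow> sqrt 2 * \<gamma> * f 0"
    by (simp only: sip_inner_indicator_zero sbm_inner_indicator_zero)
  show "(\<lambda>N. 1 / real N + sqrt 2 * \<gamma>) \<longlonglongrightarrow> sqrt 2 * \<gamma>"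
    using tendsto_add[OF lim_1_over_n tendsto_const] by simp
  show "sqrt 2 * \<gamma> \<noteq> 0"
    using assms(1) by simp
qed

end
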